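(* Let $\alpha\in(\pi/8,3\pi/8)$ with $\alpha/\pi\notin\mathbb{Q}$, $\beta=\alpha-\pi/2$, $\rho=0.01$, $A_1=\rho R(\alpha)$, $A_2=\rho R(\beta)$ where $R(\theta)=\begin{bmatrix}\cos\theta&-\sin\theta\\ \sin\theta&\cos\theta\end{bmatrix}$, and $c(x)=x_1^2+2x_2^2$ for $x=[x_1,x_2]^\top\in\mathbb{R}^2$. Then the worst-case value function $J^\circ$ of $\{A_1,A_2\}$ with cost $c$ is non-differentiable on a dense subset of $\mathbb{R}^2$.
   Context: For the switched linear system $\xi(t+1)=A_{\sigma(t)}\xi(t)$ with switching signal $\sigma:\mathbb{N}\to\{1,2\}$, $\xi(t,x,\sigma)$ denotes the solution with $\xi(0)=x$, and $J^\circ(x)=\sup_\sigma\sum_{t=0}^\infty c(\xi(t,x,\sigma))$. *)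

theory Defs
  imports "HOL-Analysis.Analysis"
begin

definition rot :: "real \<Rightarrow> real^2^2" where
  "rot \<theta> = (\<chi> i j. if i = 1 \<and> j = 1 then cos \<theta>
                     else if i = 1 \<and> j = 2 then - sin \<theta>
                     else if i = 2 \<and> j = 1 then sin \<theta>
                     else cos \<theta>)"

fun traj :: "(nat \<Rightarrow> real^2^2) \<Rightarrow> nat \<Rightarrow> real^2 \<Rightarrow> (nat \<Rightarrow> nat) \<Rightarrow> real^2" where
  "traj A 0 x \<sigma> = x"
| "traj A (Suc t) x \<sigma> = A (\<sigma> t) *v traj A t x \<sigma>"

definition signals :: "(nat \<Rightarrow> nat) set" where
  "signals = {\<sigma>. \<forall>t. \<sigma> t \<in> {1, 2}}"

definition worst_value :: "(nat \<Rightarrow> real^2^2) \<Rightarrow> (real^2 \<Rightarrow> real) \<Rightarrow> real^2 \<Rightarrow> real" where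
  "worst_value A c x = (SUP \<sigma>\<in>signals. (\<Sum>t. c (traj A t x \<sigma>)))"

end

theory Submission
  imports Defs
begin

(* With rho = 1/100, every trajectory is rho^t times a rotation of x, so J is a supremum of
   nonnegative quadratic forms: it is homogeneous of degree 2, even, midpoint convex, locally
   Lipschitz, and satisfies the Bellman equation J x = c x + max (J (A1 x)) (J (A2 x)).
   Since A2 x is A1 x turned by -pi/2, the two branches tie exactly where
   gap y = J y - J (rot (-pi/2) y) vanishes at y = rot alpha x; as rho is tiny, gap is
   y2^2 - y1^2 up to a perturbation of relative size 4/9999, so on the unit circle its zeros
   are gamma + Z pi/2 for a single angle gamma.  At a tie the maximum of the two branches has a
   kink transversal to the tie set, so J is not differentiable there.  Where one branch strictly
   dominates, the Bellman equation expresses J near x through J near A_i x, so kinks propagate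
   backwards from A_i x to x.  Starting from the tie directions gamma - alpha + Z pi/2, this
   yields kinks in all directions gamma - k alpha + Z pi/2 (k >= 1): irrationality of alpha/pi
   keeps these directions off the tie set and makes them dense, and homogeneity spreads each
   kink along its ray. *)

section \<open>Planar rotations and elementary trigonometry\<close>

lemma vec2_eq_iff: "(x::real^2) = y \<longleftrightarrow> x$1 = y$1 \<and> x$2 = y$2"
  by (simp add: vec_eq_iff forall_2)

lemma norm_vec2: "norm (x::real^2) = sqrt ((x$1)\<^sup>2 + (x$2)\<^sup>2)"
  by (simp add: norm_vec_def L2_set_def sum_2)

lemma norm_vec2_sq: "(norm (x::real^2))\<^sup>2 = (x$1)\<^sup>2 + (x$2)\<^sup>2"
  by (simp add: norm_vec2)

lemma rot_mult_vec: "rot \<theta> *v x = vector [cos \<theta> * x$1 - sin \<theta> * x$2, sin \<theta> * x$1 + cos \<theta> * x$2]"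
  by (simp add: vec2_eq_iff rot_def matrix_vector_mult_def sum_2)

lemma rot_rot: "rot a *v (rot b *v x) = rot (a + b) *v x"
  by (simp add: rot_mult_vec vec2_eq_iff cos_add sin_add algebra_simps)

lemma rot_0 [simp]: "rot 0 *v x = x"
  by (simp add: rot_mult_vec vec2_eq_iff)

lemma norm_rot [simp]: "norm (rot \<theta> *v x) = norm x"
proof -
  have "(norm (rot \<theta> *v x))\<^sup>2 = ((sin \<theta>)\<^sup>2 + (cos \<theta>)\<^sup>2) * (norm x)\<^sup>2"
    unfolding norm_vec2_sq rot_mult_vec vector_2 by algebra
  then show ?thesis by (simp add: power2_eq_iff_nonneg)
qed

definition dir :: "real \<Rightarrow> real^2" where
  "dir t = vector [cos t, sin t]"

lemma rot_dir: "rot a *v dir t = dir (t + a)"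
  by (simp add: dir_def rot_mult_vec vec2_eq_iff cos_add sin_add algebra_simps)

lemma norm_dir [simp]: "norm (dir t) = 1"
  by (simp add: norm_vec2 dir_def)

lemma dir_add_pi: "dir (t + pi) = - dir t"
  by (simp add: dir_def vec2_eq_iff)

lemma norm_dir_diff_le: "norm (dir a - dir b) \<le> \<bar>a - b\<bar>"
proof -
  have "(norm (dir a - dir b))\<^sup>2
      = ((sin a)\<^sup>2 + (cos a)\<^sup>2) + ((sin b)\<^sup>2 + (cos b)\<^sup>2) - 2 * (cos a * cos b + sin a * sin b)"
    unfolding norm_vec2_sq dir_def by (simp add: power2_eq_square algebra_simps)
  also have "\<dots> = 2 - 2 * cos (a - b)"
    by (simp add: cos_diff)
  also have "\<dots> = (2 * sin ((a - b) / 2))\<^sup>2"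
  proof -
    have e: "2 * ((a - b) / 2) = a - b" by simp
    show ?thesis using cos_double_sin[of "(a - b) / 2", unfolded e] by (simp add: power2_eq_square)
  qed
  also have "\<dots> \<le> (a - b)\<^sup>2"
    unfolding abs_le_square_iff[symmetric] using abs_sin_x_le_abs_x[of "(a - b) / 2"] by simp
  finally show ?thesis
    by (metis abs_le_square_iff abs_norm_cancel)
qed

lemma continuous_dir: "continuous_on UNIV dir"
proof -
  have e: "dir = (\<lambda>t. cos t *\<^sub>R axis 1 1 + sin t *\<^sub>R axis 2 1)"
    by (simp add: fun_eq_iff vec2_eq_iff dir_def axis_def)
  show ?thesis unfolding e by (intro continuous_intros)
qed

lemma polar_decomposition: "\<exists>\<theta>. x = norm x *\<^sub>R dir \<theta>"
proof (cases "x = 0")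
  case False
  then have n: "norm x \<noteq> 0" by simp
  have "(x$1 / norm x)\<^sup>2 + (x$2 / norm x)\<^sup>2 = 1"
    using n by (simp add: power_divide norm_vec2_sq[symmetric] add_divide_distrib[symmetric])
  then obtain \<theta> where "cos \<theta> = x$1 / norm x" "sin \<theta> = x$2 / norm x"
    using sincos_total_2pi by metis
  then have "x = norm x *\<^sub>R dir \<theta>"
    using n by (simp add: vec2_eq_iff dir_def)
  then show ?thesis ..
qed simp

lemma abs_sin_ge_third:
  fixes x :: real
  assumes "\<bar>x\<bar> \<le> 2"
  shows "\<bar>x\<bar> / 3 \<le> \<bar>sin x\<bar>"
proof -
  have taylor: "(\<Sum>m<3. sin_coeff m * x ^ m) = x" "inverse (fact 3) = (1 / 6 :: real)"
    by (simp_all add: eval_nat_numeral sin_coeff_def)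
  have "\<bar>sin x - x\<bar> \<le> \<bar>x\<bar> ^ 3 / 6"
    using Maclaurin_sin_bound[of x 3] unfolding taylor by simp
  moreover have "\<bar>x\<bar> * \<bar>x\<bar>\<^sup>2 \<le> \<bar>x\<bar> * 2\<^sup>2"
    using assms by (intro mult_left_mono power_mono) simp_all
  then have "\<bar>x\<bar> ^ 3 \<le> 4 * \<bar>x\<bar>"
    by (simp add: power3_eq_cube power2_eq_square)
  ultimately show ?thesis
    by linarith
qed

lemma one_minus_cos_le_abs:
  fixes d :: real
  assumes "\<bar>d\<bar> \<le> 2"
  shows "1 - cos d \<le> \<bar>d\<bar>"
proof -
  have "1 - cos d = 2 * (sin (d / 2))\<^sup>2"
    using cos_double_sin[of "d / 2"] by simp
  also have "\<dots> \<le> 2 * (d / 2)\<^sup>2"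
    using abs_sin_x_le_abs_x[of "d / 2"] unfolding abs_le_square_iff by simp
  also have "\<dots> = \<bar>d\<bar> * (\<bar>d\<bar> / 2)"
    by (simp add: power2_eq_square)
  also have "\<dots> \<le> \<bar>d\<bar>"
    using assms mult_left_mono[of "\<bar>d\<bar> / 2" 1 "\<bar>d\<bar>"] by simp
  finally show ?thesis .
qed

(* With d = y - x: as cos x is small, |sin x| is almost 1, so cos x - cos y is essentially
   sin x * sin d, of order |d|; this is incompatible with the slow variation unless d = 0. *)

lemma eq_if_cos_small_and_slowly_varying:
  fixes x y :: real
  assumes "\<bar>cos x\<bar> \<le> 1/100" "\<bar>cos y\<bar> \<le> 1/100"
    and slow: "\<bar>cos y - cos x\<bar> \<le> \<bar>y - x\<bar> / 100" and "\<bar>y - x\<bar> \<le> pi / 2"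
  shows "y = x"
proof -
  define d where "d = y - x"
  have "\<bar>d\<bar> \<le> 2"
    using \<open>\<bar>y - x\<bar> \<le> pi / 2\<close> pi_less_4 by (simp add: d_def)
  have "(cos x)\<^sup>2 \<le> (1/100)\<^sup>2"
    using \<open>\<bar>cos x\<bar> \<le> 1/100\<close> abs_le_square_iff[of "cos x" "1/100"] by simp
  then have "(99/100)\<^sup>2 \<le> (sin x)\<^sup>2"
    unfolding sin_squared_eq by (simp add: power_divide)
  then have sin_x: "99/100 \<le> \<bar>sin x\<bar>"
    using abs_le_square_iff[of "99/100" "sin x"] by simp
  have "1 - cos d \<le> \<bar>d\<bar>"
    using \<open>\<bar>d\<bar> \<le> 2\<close> by (rule one_minus_cos_le_abs)
  then have "\<bar>cos x * (1 - cos d)\<bar> \<le> \<bar>d\<bar> / 100"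
    using \<open>\<bar>cos x\<bar> \<le> 1/100\<close> mult_mono[of "\<bar>cos x\<bar>" "1/100" "1 - cos d" "\<bar>d\<bar>"]
    by (simp add: abs_mult)
  moreover have "cos x - cos y = cos x * (1 - cos d) + sin x * sin d"
  proof -
    have "cos x * (1 - cos d) + sin x * sin d = cos x - cos y * (cos x * cos x + sin x * sin x)"
      by (simp add: d_def cos_diff sin_diff algebra_simps del: sin_cos_squared_add3)
    then show ?thesis
      by simp
  qed
  ultimately have "\<bar>sin x\<bar> * \<bar>sin d\<bar> \<le> \<bar>d\<bar> / 50"
    using slow unfolding d_def[symmetric] abs_mult[symmetric] abs_le_iff by linarith
  moreover have "99/100 * (\<bar>d\<bar> / 3) \<le> \<bar>sin x\<bar> * \<bar>sin d\<bar>"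
    using mult_mono[OF sin_x abs_sin_ge_third[OF \<open>\<bar>d\<bar> \<le> 2\<close>]] by simp
  ultimately have "\<bar>d\<bar> = 0"
    by linarith
  then show ?thesis
    by (simp add: d_def)
qed

section \<open>Criteria for (non)differentiability\<close>

lemma not_differentiable_at_if_second_difference_ge:
  fixes f :: "'a::real_normed_vector \<Rightarrow> real"
  assumes "0 < \<kappa>" and "0 < b"
    and second_difference: "\<And>h. 0 < h \<Longrightarrow> h < b \<Longrightarrow> \<kappa> * h \<le> f (x + h *\<^sub>R v) + f (x - h *\<^sub>R v) - 2 * f x"
  shows "\<not> f differentiable (at x)"
proof
  assume "f differentiable (at x)"
  then obtain f' where f': "(f has_derivative f') (at x)"
    unfolding differentiable_def by blast
  have "((\<lambda>s. x + s *\<^sub>R v) has_derivative (\<lambda>s. s *\<^sub>R v)) (at 0)"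
    by (auto intro!: derivative_eq_intros)
  from diff_chain_at[OF this] f'
  have "((\<lambda>s. f (x + s *\<^sub>R v)) has_derivative (\<lambda>s. f' (s *\<^sub>R v))) (at 0)"
    by (simp add: o_def)
  moreover have "(\<lambda>s. f' (s *\<^sub>R v)) = (*) (f' v)"
    using has_derivative_linear[OF f'] by (simp add: linear_scale fun_eq_iff)
  ultimately have D: "((\<lambda>s. f (x + s *\<^sub>R v)) has_field_derivative f' v) (at 0)"
    by (simp add: has_field_derivative_def)
  have "((\<lambda>s. f (x + (- s) *\<^sub>R v)) has_field_derivative f' v * (- 1)) (at 0)"
    using D by (intro DERIV_chain2[where g = uminus]) (auto intro!: derivative_eq_intros)
  from DERIV_add[OF D this]
  have "((\<lambda>h. (f (x + h *\<^sub>R v) + f (x - h *\<^sub>R v) - 2 * f x) / h) \<longlongrightarrow> 0) (at_right 0)"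
    unfolding DERIV_def by (auto intro: tendsto_mono[OF at_le])
  moreover have "\<forall>\<^sub>F h in at_right 0. \<kappa> \<le> (f (x + h *\<^sub>R v) + f (x - h *\<^sub>R v) - 2 * f x) / h"
    unfolding eventually_at_right_field using \<open>0 < b\<close> second_difference
    by (auto simp: pos_le_divide_eq mult.commute intro!: exI[of _ b])
  ultimately have "\<kappa> \<le> 0"
    by (rule tendsto_lowerbound) simp
  then show False using \<open>0 < \<kappa>\<close> by simp
qed

lemma differentiable_at_scaleR_if_homogeneous:
  fixes f :: "'a::real_normed_vector \<Rightarrow> real"
  assumes homogeneous: "\<And>r z. f (r *\<^sub>R z) = r\<^sup>2 * f z"
    and "s \<noteq> 0" and "f differentiable (at x)"
  shows "f differentiable (at (s *\<^sub>R x))"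
proof -
  have "f = (\<lambda>z. s\<^sup>2 * f (inverse s *\<^sub>R z))"
  proof
    fix z
    show "f z = s\<^sup>2 * f (inverse s *\<^sub>R z)"
      using homogeneous[of s "inverse s *\<^sub>R z"] \<open>s \<noteq> 0\<close> by simp
  qed
  moreover have "(f \<circ> (\<lambda>z. inverse s *\<^sub>R z)) differentiable (at (s *\<^sub>R x))"
    using \<open>s \<noteq> 0\<close> \<open>f differentiable (at x)\<close>
    by (intro differentiable_chain_at bounded_linear_imp_differentiable[OF bounded_linear_scaleR_right])
      simp
  then have "(\<lambda>z. s\<^sup>2 * f (inverse s *\<^sub>R z)) differentiable (at (s *\<^sub>R x))"
    by (simp add: o_def differentiable_mult)
  ultimately show ?thesis by simp
qed

lemma differentiable_at_image_of_functional_equation: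
  fixes f g :: "'a::real_normed_vector \<Rightarrow> real" and M M' :: "'a \<Rightarrow> 'a"
  assumes "open U" "x \<in> U" and equation: "\<And>u. u \<in> U \<Longrightarrow> f u = g u + f (M u)"
    and "bounded_linear M'" and inverse: "\<And>u. M' (M u) = u" "\<And>z. M (M' z) = z"
    and "g differentiable (at x)" "f differentiable (at x)"
  shows "f differentiable (at (M x))"
proof -
  have "(\<lambda>u. f u - g u) differentiable (at (M' (M x)))"
    using assms by (simp add: differentiable_diff)
  then have "((\<lambda>u. f u - g u) \<circ> M') differentiable (at (M x))"
    by (intro differentiable_chain_at bounded_linear_imp_differentiable[OF \<open>bounded_linear M'\<close>])
  then obtain D where D: "(((\<lambda>u. f u - g u) \<circ> M') has_derivative D) (at (M x))"
    unfolding differentiable_def by blast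
  have "open (M' -` U)"
    using \<open>open U\<close> \<open>bounded_linear M'\<close>
    by (simp add: continuous_open_vimage linear_continuous_at)
  moreover have "M x \<in> M' -` U"
    using \<open>x \<in> U\<close> inverse by simp
  moreover have "((\<lambda>u. f u - g u) \<circ> M') z = f z" if "z \<in> M' -` U" for z
    using equation[of "M' z"] that inverse by simp
  ultimately have "(f has_derivative D) (at (M x))"
    using has_derivative_transform_within_open[OF D] by blast
  then show ?thesis
    unfolding differentiable_def by blast
qed

section \<open>Switched linear systems with a quadratic cost\<close>

lemma traj_add: "traj A t (x + y) \<sigma> = traj A t x \<sigma> + traj A t y \<sigma>"
  by (induction t) (simp_all add: matrix_vector_right_distrib)

lemma traj_diff: "traj A t (x - y) \<sigma> = traj A t x \<sigma> - traj A t y \<sigma>"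
  by (induction t) (simp_all add: matrix_vector_mult_diff_distrib)

lemma traj_scaleR: "traj A t (r *\<^sub>R x) \<sigma> = r *\<^sub>R traj A t x \<sigma>"
  by (induction t) (simp_all add: matrix_vector_mult_scaleR)

lemma traj_Suc_shift: "traj A (Suc t) x \<sigma> = traj A t (A (\<sigma> 0) *v x) (\<sigma> \<circ> Suc)"
  by (induction t) simp_all

(* c is meant to be a positive semidefinite quadratic form; cost_diff_le is the
   Cauchy-Schwarz bound for its polar form, c x - c y = B (x - y) (x + y). *)

locale quadratic_switched_system =
  fixes A :: "nat \<Rightarrow> real^2^2" and c :: "real^2 \<Rightarrow> real" and \<rho> C :: real
  assumes norm_A_le: "norm (A i *v x) \<le> \<rho> * norm x"
    and rho_nonneg: "0 \<le> \<rho>" and rho_less_1: "\<rho> < 1"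
    and cost_nonneg: "0 \<le> c x"
    and cost_le: "c x \<le> C * (norm x)\<^sup>2"
    and cost_scaleR: "c (r *\<^sub>R x) = r\<^sup>2 * c x"
    and cost_parallelogram: "c (x + y) + c (x - y) = 2 * c x + 2 * c y"
    and cost_diff_le: "c x - c y \<le> C * (norm (x - y) * norm (x + y))"
    and cost_differentiable: "c differentiable (at x)"
begin

abbreviation J :: "real^2 \<Rightarrow> real" where
  "J \<equiv> worst_value A c"

definition K :: real where
  "K = C / (1 - \<rho>\<^sup>2)"

definition signal_cost :: "(nat \<Rightarrow> nat) \<Rightarrow> real^2 \<Rightarrow> real" where
  "signal_cost \<sigma> x = (\<Sum>t. c (traj A t x \<sigma>))"

lemma C_nonneg: "0 \<le> C"
  using cost_nonneg[of "axis 1 1"] cost_le[of "axis 1 1"] by simp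

lemma norm_traj_le: "norm (traj A t x \<sigma>) \<le> \<rho> ^ t * norm x"
proof (induction t)
  case (Suc t)
  have "norm (traj A (Suc t) x \<sigma>) \<le> \<rho> * norm (traj A t x \<sigma>)"
    using norm_A_le by simp
  also have "\<dots> \<le> \<rho> ^ Suc t * norm x"
    using mult_left_mono[OF Suc rho_nonneg] by (simp add: mult.assoc)
  finally show ?case .
qed simp

lemma sums_rho2_geometric: "(\<lambda>t. M * (\<rho>\<^sup>2) ^ t) sums (M / (1 - \<rho>\<^sup>2))"
proof -
  have "\<rho>\<^sup>2 < 1"
    using rho_nonneg rho_less_1 by (simp add: power_less_one_iff abs_square_less_1)
  then show ?thesis
    using sums_mult[OF geometric_sums[of "\<rho>\<^sup>2"], of M] rho_nonneg by (simp add: field_simps)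
qed

lemma norm_traj_mult_norm_traj_le: "norm (traj A t x \<sigma>) * norm (traj A t y \<sigma>) \<le> (\<rho>\<^sup>2) ^ t * (norm x * norm y)"
  using mult_mono[OF norm_traj_le[of t x] norm_traj_le[of t y]] rho_nonneg
  by (simp add: power_mult_distrib power2_eq_square mult_ac)

lemma cost_traj_le: "c (traj A t x \<sigma>) \<le> C * (norm x)\<^sup>2 * (\<rho>\<^sup>2) ^ t"
  using cost_le[of "traj A t x \<sigma>"] mult_left_mono[OF norm_traj_mult_norm_traj_le[of t x \<sigma> x] C_nonneg]
  by (simp add: power2_eq_square mult_ac)

lemma summable_cost_traj: "summable (\<lambda>t. c (traj A t x \<sigma>))"
  by (rule summable_comparison_test'[OF sums_summable[OF sums_rho2_geometric]])
     (use cost_nonneg cost_traj_le in auto)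

lemma signal_cost_nonneg: "0 \<le> signal_cost \<sigma> x"
  unfolding signal_cost_def by (intro suminf_nonneg summable_cost_traj cost_nonneg)

lemma signal_cost_le: "signal_cost \<sigma> x \<le> K * (norm x)\<^sup>2"
  unfolding signal_cost_def K_def
  using suminf_le[OF _ summable_cost_traj sums_summable[OF sums_rho2_geometric]] cost_traj_le
    sums_unique[OF sums_rho2_geometric, of "C * (norm x)\<^sup>2"]
  by simp

lemma signal_cost_scaleR: "signal_cost \<sigma> (r *\<^sub>R x) = r\<^sup>2 * signal_cost \<sigma> x"
  unfolding signal_cost_def traj_scaleR cost_scaleR
  by (rule suminf_mult[OF summable_cost_traj])

lemma signal_cost_parallelogram:
  "signal_cost \<sigma> (x + y) + signal_cost \<sigma> (x - y) = 2 * signal_cost \<sigma> x + 2 * signal_cost \<sigma> y"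
proof -
  have "signal_cost \<sigma> (x + y) + signal_cost \<sigma> (x - y)
      = (\<Sum>t. 2 * c (traj A t x \<sigma>) + 2 * c (traj A t y \<sigma>))"
    unfolding signal_cost_def traj_add traj_diff cost_parallelogram[symmetric]
    using summable_cost_traj[of x \<sigma>] summable_cost_traj[of y \<sigma>]
    by (simp add: suminf_add summable_cost_traj flip: traj_add traj_diff)
  also have "\<dots> = 2 * signal_cost \<sigma> x + 2 * signal_cost \<sigma> y"
    unfolding signal_cost_def
    by (simp add: suminf_add[symmetric] suminf_mult summable_mult summable_cost_traj)
  finally show ?thesis .
qed

lemma signal_cost_diff_le: "signal_cost \<sigma> x - signal_cost \<sigma> y \<le> K * (norm (x - y) * norm (x + y))"
proof -
  have "c (traj A t x \<sigma>) - c (traj A t y \<sigma>) \<le> C * (norm (x - y) * norm (x + y)) * (\<rho>\<^sup>2) ^ t" for t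
    using cost_diff_le[of "traj A t x \<sigma>" "traj A t y \<sigma>"]
      mult_left_mono[OF norm_traj_mult_norm_traj_le[of t "x - y" \<sigma> "x + y"] C_nonneg]
    by (simp add: traj_add traj_diff mult_ac)
  then have "(\<Sum>t. c (traj A t x \<sigma>) - c (traj A t y \<sigma>))
      \<le> (\<Sum>t. C * (norm (x - y) * norm (x + y)) * (\<rho>\<^sup>2) ^ t)"
    by (intro suminf_le summable_diff summable_cost_traj sums_summable[OF sums_rho2_geometric])
  also have "\<dots> = K * (norm (x - y) * norm (x + y))"
    using sums_unique[OF sums_rho2_geometric, symmetric] by (simp add: K_def)
  finally have "(\<Sum>t. c (traj A t x \<sigma>) - c (traj A t y \<sigma>)) \<le> K * (norm (x - y) * norm (x + y))" .
  then show ?thesis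
    unfolding signal_cost_def by (simp add: suminf_diff summable_cost_traj)
qed

lemma signal_cost_Suc: "signal_cost \<sigma> x = c x + signal_cost (\<sigma> \<circ> Suc) (A (\<sigma> 0) *v x)"
  unfolding signal_cost_def traj_Suc_shift[symmetric]
  using suminf_split_head[OF summable_cost_traj, of x \<sigma>] by simp

lemma J_eq_SUP: "J x = (SUP \<sigma>\<in>signals. signal_cost \<sigma> x)"
  by (simp add: worst_value_def signal_cost_def)

lemma const_signal_in_signals_iff: "(\<lambda>_. i) \<in> signals \<longleftrightarrow> i \<in> {1, 2}"
  by (simp add: signals_def)

lemma signal_cost_le_J: "\<sigma> \<in> signals \<Longrightarrow> signal_cost \<sigma> x \<le> J x"
  unfolding J_eq_SUP using signal_cost_le by (intro cSUP_upper bdd_aboveI2) auto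

lemma J_least: "(\<And>\<sigma>. \<sigma> \<in> signals \<Longrightarrow> signal_cost \<sigma> x \<le> M) \<Longrightarrow> J x \<le> M"
  unfolding J_eq_SUP using const_signal_in_signals_iff[of 1] by (intro cSUP_least) auto

lemma J_nonneg: "0 \<le> J x"
  using signal_cost_nonneg signal_cost_le_J const_signal_in_signals_iff[of 1] by (meson insertI1 order_trans)

lemma J_scaleR: "J (r *\<^sub>R x) = r\<^sup>2 * J x"
proof -
  have le: "J (s *\<^sub>R y) \<le> s\<^sup>2 * J y" for s y
    using signal_cost_le_J[of _ y] by (intro J_least) (simp add: signal_cost_scaleR mult_left_mono)
  show ?thesis
  proof (cases "r = 0")
    case True
    then show ?thesis
      using le[of 0 x] J_nonneg[of 0] by simp
  next
    case False
    have "J x = J (inverse r *\<^sub>R (r *\<^sub>R x))"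
      using False by simp
    also have "\<dots> \<le> (inverse r)\<^sup>2 * J (r *\<^sub>R x)"
      by (rule le)
    finally have "r\<^sup>2 * J x \<le> J (r *\<^sub>R x)"
      using False by (simp add: power_inverse field_simps)
    then show ?thesis
      using le[of r x] by simp
  qed
qed

lemma J_uminus [simp]: "J (- x) = J x"
  using J_scaleR[of "- 1" x] by simp

lemma J_midpoint_convex: "2 * J x \<le> J (x + y) + J (x - y)"
proof -
  have "signal_cost \<sigma> x \<le> (J (x + y) + J (x - y)) / 2" if "\<sigma> \<in> signals" for \<sigma>
  proof -
    have "2 * signal_cost \<sigma> x \<le> J (x + y) + J (x - y)"
      using signal_cost_parallelogram[of \<sigma> x y] signal_cost_nonneg[of \<sigma> y]
        signal_cost_le_J[OF that, of "x + y"] signal_cost_le_J[OF that, of "x - y"]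
      by linarith
    then show ?thesis by simp
  qed
  then have "J x \<le> (J (x + y) + J (x - y)) / 2"
    by (rule J_least)
  then show ?thesis
    by simp
qed

lemma J_diff_le: "J x - J y \<le> K * (norm (x - y) * norm (x + y))"
proof -
  have "signal_cost \<sigma> x \<le> J y + K * (norm (x - y) * norm (x + y))" if "\<sigma> \<in> signals" for \<sigma>
    using signal_cost_diff_le[of \<sigma> x y] signal_cost_le_J[OF that, of y] by linarith
  then have "J x \<le> J y + K * (norm (x - y) * norm (x + y))"
    by (rule J_least)
  then show ?thesis
    by simp
qed

lemma abs_J_diff_le: "\<bar>J x - J y\<bar> \<le> K * (norm (x - y) * norm (x + y))"
  using J_diff_le[of x y] J_diff_le[of y x] by (simp add: norm_minus_commute add.commute)

lemma isCont_J: "isCont J x"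
proof -
  have "\<forall>\<^sub>F y in at x. norm (J y - J x) \<le> K * (norm (y - x) * norm (y + x))"
    using abs_J_diff_le by (intro always_eventually allI) simp
  moreover have "((\<lambda>y. K * (norm (y - x) * norm (y + x))) \<longlongrightarrow> K * (norm (x - x) * norm (x + x))) (at x)"
    by (intro tendsto_intros)
  then have "((\<lambda>y. K * (norm (y - x) * norm (y + x))) \<longlongrightarrow> 0) (at x)"
    by simp
  ultimately have "((\<lambda>y. J y - J x) \<longlongrightarrow> 0) (at x)"
    by (rule Lim_null_comparison)
  then show ?thesis
    unfolding isCont_def by (rule LIM_zero_cancel)
qed

definition next_value :: "real^2 \<Rightarrow> real" where
  "next_value x = max (J (A 1 *v x)) (J (A 2 *v x))"

lemma bellman: "J x = c x + next_value x"
  unfolding next_value_def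
proof (rule antisym)
  have "signal_cost \<sigma> x \<le> c x + max (J (A 1 *v x)) (J (A 2 *v x))" if "\<sigma> \<in> signals" for \<sigma>
  proof -
    have "\<sigma> \<circ> Suc \<in> signals" "\<sigma> 0 \<in> {1, 2}"
      using that by (auto simp: signals_def)
    then show ?thesis
      using signal_cost_Suc[of \<sigma> x] signal_cost_le_J[of "\<sigma> \<circ> Suc" "A (\<sigma> 0) *v x"] by auto
  qed
  then show "J x \<le> c x + max (J (A 1 *v x)) (J (A 2 *v x))"
    by (rule J_least)
next
  have "J (A i *v x) \<le> J x - c x" if "i \<in> {1, 2}" for i
  proof (rule J_least)
    fix \<tau> assume "\<tau> \<in> signals"
    define \<sigma> where "\<sigma> = case_nat i \<tau>"
    have "\<sigma> \<in> signals"
      using \<open>\<tau> \<in> signals\<close> that by (auto simp: signals_def \<sigma>_def split: nat.splits)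
    moreover have "signal_cost \<sigma> x = c x + signal_cost \<tau> (A i *v x)"
      using signal_cost_Suc[of \<sigma> x] by (simp add: \<sigma>_def o_def)
    ultimately show "signal_cost \<tau> (A i *v x) \<le> J x - c x"
      using signal_cost_le_J[of \<sigma> x] by simp
  qed
  from this[of 1] this[of 2] show "c x + max (J (A 1 *v x)) (J (A 2 *v x)) \<le> J x"
    by simp
qed

lemma K_nonneg: "0 \<le> K"
  using C_nonneg rho_nonneg rho_less_1 by (simp add: K_def power_le_one)

lemma next_value_diff_le: "next_value x - next_value y \<le> K * \<rho>\<^sup>2 * (norm (x - y) * norm (x + y))"
proof -
  have "J (A i *v x) - J (A i *v y) \<le> K * \<rho>\<^sup>2 * (norm (x - y) * norm (x + y))" for i
  proof -
    have "norm (A i *v (x - y)) * norm (A i *v (x + y)) \<le> \<rho>\<^sup>2 * (norm (x - y) * norm (x + y))"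
      using mult_mono[OF norm_A_le[of i "x - y"] norm_A_le[of i "x + y"]] rho_nonneg
      by (simp add: power2_eq_square mult_ac)
    then show ?thesis
      using J_diff_le[of "A i *v x" "A i *v y"] mult_left_mono[OF _ K_nonneg]
      by (fastforce simp: matrix_vector_mult_diff_distrib matrix_vector_right_distrib mult.assoc)
  qed
  then show ?thesis
    unfolding next_value_def by (smt (verit))
qed

lemma J_differentiable_scaleR_iff:
  assumes "r \<noteq> 0"
  shows "J differentiable (at (r *\<^sub>R x)) \<longleftrightarrow> J differentiable (at x)"
  using differentiable_at_scaleR_if_homogeneous[OF J_scaleR, of r x]
    differentiable_at_scaleR_if_homogeneous[OF J_scaleR, of "inverse r" "r *\<^sub>R x"] assms
  by auto

lemma differentiable_at_dominant_branch:
  assumes "{i, j} = {1, 2}" and "invertible (A i)"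
    and dominant: "J (A j *v x) < J (A i *v x)" and "J differentiable (at x)"
  shows "J differentiable (at (A i *v x))"
proof -
  obtain B where B: "A i ** B = mat 1" "B ** A i = mat 1"
    using \<open>invertible (A i)\<close> unfolding invertible_def by blast
  define U where "U = {u. J (A j *v u) < J (A i *v u)}"
  have continuous: "continuous_on UNIV (\<lambda>u. J (A k *v u))" for k
    by (intro continuous_at_imp_continuous_on ballI isCont_o2[OF matrix_vector_mult_linear_continuous_at isCont_J])
  show ?thesis
  proof (rule differentiable_at_image_of_functional_equation[where U = U and g = c and M = "(*v) (A i)" and M' = "(*v) B"])
    show "open U"
      unfolding U_def by (rule open_Collect_less[OF continuous continuous])
    show "x \<in> U"
      using dominant by (simp add: U_def)
    show "J u = c u + J (A i *v u)" if "u \<in> U" for u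
      using bellman[of u] that assms(1) by (auto simp: U_def next_value_def doubleton_eq_iff max_def)
    show "B *v (A i *v u) = u" for u
      using B by (simp add: matrix_vector_mul_assoc)
    show "A i *v (B *v z) = z" for z
      using B by (simp add: matrix_vector_mul_assoc)
  qed (simp_all add: matrix_vector_mul_bounded_linear cost_differentiable assms(4))
qed

end

section \<open>The pair of scaled rotations\<close>

definition cost :: "real^2 \<Rightarrow> real" where
  "cost x = (x$1)\<^sup>2 + 2 * (x$2)\<^sup>2"

lemma cost_diff_le: "cost x - cost y \<le> 2 * (norm (x - y) * norm (x + y))"
proof -
  define u where "u = x - y"
  define v where "v = x + y"
  have "cost x - cost y = (vector [u$1, 2 * u$2] :: real^2) \<bullet> v"
    by (simp add: u_def v_def cost_def inner_vec_def sum_2 power2_eq_square algebra_simps)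
  also have "\<dots> \<le> norm (vector [u$1, 2 * u$2] :: real^2) * norm v"
    by (rule norm_cauchy_schwarz)
  also have "\<dots> \<le> norm (2 *\<^sub>R u) * norm v"
  proof (rule mult_right_mono)
    show "norm (vector [u$1, 2 * u$2] :: real^2) \<le> norm (2 *\<^sub>R u)"
      by (rule power2_le_imp_le) (simp_all add: norm_vec2_sq power_mult_distrib)
  qed simp
  finally show ?thesis
    by (simp add: u_def v_def)
qed

lemma cost_differentiable: "cost differentiable (at x)"
proof -
  have "(\<lambda>x. x $ i) differentiable (at x)" for i :: 2
    by (rule bounded_linear_imp_differentiable[OF bounded_linear_vec_nth])
  then show ?thesis
    unfolding cost_def by (simp add: differentiable_add differentiable_mult differentiable_power)
qed

definition rotation_mats :: "real \<Rightarrow> nat \<Rightarrow> real^2^2" where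
  "rotation_mats \<alpha> = (\<lambda>i::nat. if i = 1 then (0.01::real) *\<^sub>R rot \<alpha> else (0.01::real) *\<^sub>R rot (\<alpha> - pi / 2))"

lemma det_scaleR_rot: "det (r *\<^sub>R rot \<theta>) = r\<^sup>2"
proof -
  have "det (r *\<^sub>R rot \<theta>) = r\<^sup>2 * (cos \<theta>)\<^sup>2 + r\<^sup>2 * (sin \<theta>)\<^sup>2"
    by (simp add: det_2 rot_def power2_eq_square)
  then show ?thesis
    by (simp flip: distrib_left)
qed

locale rotation_pair =
  fixes \<alpha> :: real

sublocale rotation_pair \<subseteq> quadratic_switched_system "rotation_mats \<alpha>" cost "1/100" 2
proof
  show "norm (rotation_mats \<alpha> i *v x) \<le> 1/100 * norm x" for i x
    by (simp add: rotation_mats_def flip: scaleR_matrix_vector_assoc)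
  show "cost (r *\<^sub>R x) = r\<^sup>2 * cost x" for r x
    by (simp add: cost_def power2_eq_square algebra_simps)
  show "cost (x + y) + cost (x - y) = 2 * cost x + 2 * cost y" for x y
    by (simp add: cost_def power2_eq_square algebra_simps)
  show "cost x \<le> 2 * (norm x)\<^sup>2" "0 \<le> cost x" for x
    by (simp_all add: cost_def norm_vec2_sq)
qed (simp_all add: cost_diff_le cost_differentiable)

definition perp :: "real^2 \<Rightarrow> real^2" where
  "perp y = vector [y$2, - (y$1)]"

lemma perp_dir: "perp (dir t) = dir (t - pi / 2)"
  by (simp add: perp_def dir_def vec2_eq_iff cos_diff sin_diff)

lemma rot_diff_half_pi: "rot (\<theta> - pi / 2) *v y = perp (rot \<theta> *v y)"
  by (simp add: rot_mult_vec perp_def vec2_eq_iff cos_diff sin_diff)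

lemma perp_add: "perp (x + y) = perp x + perp y"
  and perp_diff: "perp (x - y) = perp x - perp y"
  by (simp_all add: perp_def vec2_eq_iff)

lemma norm_perp [simp]: "norm (perp y) = norm y"
  by (simp add: perp_def norm_vec2 add.commute)

lemma norm_diff_perp_mult_norm_add_perp: "norm (y - perp y) * norm (y + perp y) = 2 * (norm y)\<^sup>2"
proof -
  have "norm (y - perp y) = sqrt (2 * (norm y)\<^sup>2)" "norm (y + perp y) = sqrt (2 * (norm y)\<^sup>2)"
    by (simp_all add: norm_vec2 norm_vec2_sq perp_def power2_eq_square algebra_simps)
  then show ?thesis
    by simp
qed

context rotation_pair
begin

lemma rotation_mats_mult_vec:
  "rotation_mats \<alpha> 1 *v x = (1/100) *\<^sub>R (rot \<alpha> *v x)"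
  "rotation_mats \<alpha> 2 *v x = (1/100) *\<^sub>R perp (rot \<alpha> *v x)"
  by (simp_all add: rotation_mats_def rot_diff_half_pi flip: scaleR_matrix_vector_assoc)

lemma next_value_eq: "next_value x = max (J (rot \<alpha> *v x)) (J (perp (rot \<alpha> *v x))) / 10000"
  unfolding next_value_def rotation_mats_mult_vec by (simp add: J_scaleR power2_eq_square max_divide_distrib_right)

lemma abs_next_value_diff_le: "\<bar>next_value x - next_value y\<bar> \<le> 2/9999 * (norm (x - y) * norm (x + y))"
proof -
  have K: "K * (1/100)\<^sup>2 = 2/9999"
    by (simp add: K_def power2_eq_square)
  have "next_value x - next_value y \<le> 2/9999 * (norm (x - y) * norm (x + y))" for x y
    using next_value_diff_le[of x y] unfolding K .
  from this[of x y] this[of y x] show ?thesis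
    by (intro abs_leI) (simp_all add: norm_minus_commute add.commute)
qed

(* By next_value_eq, the two branches of the Bellman equation at x tie exactly when
   gap (rot alpha x) = 0. *)

definition gap :: "real^2 \<Rightarrow> real" where
  "gap y = J y - J (perp y)"

definition gap_error :: "real^2 \<Rightarrow> real" where
  "gap_error y = next_value y - next_value (perp y)"

lemma gap_eq: "gap y = ((y$2)\<^sup>2 - (y$1)\<^sup>2) + gap_error y"
  using bellman[of y] bellman[of "perp y"] by (simp add: gap_def gap_error_def cost_def perp_def)

lemma abs_gap_error_diff_le: "\<bar>gap_error y - gap_error z\<bar> \<le> 4/9999 * (norm (y - z) * norm (y + z))"
proof -
  have "\<bar>next_value (perp y) - next_value (perp z)\<bar> \<le> 2/9999 * (norm (y - z) * norm (y + z))"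
    using abs_next_value_diff_le[of "perp y" "perp z"] by (simp flip: perp_diff perp_add)
  then show ?thesis
    using abs_next_value_diff_le[of y z] unfolding gap_error_def by linarith
qed

lemma abs_gap_error_le: "\<bar>gap_error y\<bar> \<le> 4/9999 * (norm y)\<^sup>2"
  using abs_next_value_diff_le[of y "perp y"] norm_diff_perp_mult_norm_add_perp[of y]
  by (simp add: gap_error_def)

lemma gap_error_transversal_le:
  assumes "0 \<le> h" "h \<le> 1/2"
  shows "gap_error (y - h *\<^sub>R vector [- (y$1), y$2]) - gap_error y \<le> h / 2 * (norm y)\<^sup>2"
proof -
  define w :: "real^2" where "w = vector [- (y$1), y$2]"
  have "norm w = norm y"
    by (simp add: w_def norm_vec2)
  have "y - h *\<^sub>R w + y = 2 *\<^sub>R y - h *\<^sub>R w"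
    by (simp add: vec2_eq_iff)
  then have "norm (y - h *\<^sub>R w + y) \<le> 2 * norm y + h * norm y"
    using norm_triangle_ineq4[of "2 *\<^sub>R y" "h *\<^sub>R w"] assms \<open>norm w = norm y\<close> by simp
  also have "\<dots> \<le> 5/2 * norm y"
    using assms mult_right_mono[of h "1/2" "norm y"] by simp
  finally have bound: "norm (y - h *\<^sub>R w + y) \<le> 5/2 * norm y" .
  have "norm (h *\<^sub>R w) * norm (y - h *\<^sub>R w + y) = h * norm y * norm (y - h *\<^sub>R w + y)"
    using assms \<open>norm w = norm y\<close> by simp
  also have "\<dots> \<le> h * norm y * (5/2 * norm y)"
    by (rule mult_left_mono[OF bound]) (use assms in simp)
  also have "\<dots> = 5/2 * (h * (norm y)\<^sup>2)"
    by (simp add: power2_eq_square)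
  finally have "4/9999 * (norm (h *\<^sub>R w) * norm (y - h *\<^sub>R w + y)) \<le> 4/9999 * (5/2 * (h * (norm y)\<^sup>2))"
    by (rule mult_left_mono) simp
  moreover have "\<bar>gap_error (y - h *\<^sub>R w) - gap_error y\<bar>
      \<le> 4/9999 * (norm (h *\<^sub>R w) * norm (y - h *\<^sub>R w + y))"
    using abs_gap_error_diff_le[of "y - h *\<^sub>R w" y] by simp
  moreover have "0 \<le> h * (norm y)\<^sup>2"
    using assms by simp
  ultimately show ?thesis
    using abs_ge_self[of "gap_error (y - h *\<^sub>R w) - gap_error y"] unfolding w_def by linarith
qed

(* Moving from y in the direction (y1, - y2) decreases y2^2 - y1^2 at the rate 2 |y|^2,
   which dominates the perturbation gap_error. *)

lemma gap_decreases_transversally: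
  assumes "0 \<le> h" "h \<le> 1/2"
  shows "gap (y - h *\<^sub>R vector [- (y$1), y$2]) \<le> gap y - h * (norm y)\<^sup>2"
proof -
  define w :: "real^2" where "w = vector [- (y$1), y$2]"
  have "((y - h *\<^sub>R w)$2)\<^sup>2 - ((y - h *\<^sub>R w)$1)\<^sup>2 - ((y$2)\<^sup>2 - (y$1)\<^sup>2)
      = - 2 * h * ((y$1)\<^sup>2 + (y$2)\<^sup>2) + h\<^sup>2 * ((y$2)\<^sup>2 - (y$1)\<^sup>2)"
    by (simp add: w_def power2_eq_square algebra_simps)
  then have quadratic: "((y - h *\<^sub>R w)$2)\<^sup>2 - ((y - h *\<^sub>R w)$1)\<^sup>2 - ((y$2)\<^sup>2 - (y$1)\<^sup>2)
      = - 2 * h * (norm y)\<^sup>2 + h\<^sup>2 * ((y$2)\<^sup>2 - (y$1)\<^sup>2)"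
    by (simp add: norm_vec2_sq)
  have "(y$2)\<^sup>2 - (y$1)\<^sup>2 \<le> (norm y)\<^sup>2"
    by (simp add: norm_vec2_sq)
  then have "h\<^sup>2 * ((y$2)\<^sup>2 - (y$1)\<^sup>2) \<le> h\<^sup>2 * (norm y)\<^sup>2"
    by (simp add: mult_left_mono)
  also have "\<dots> \<le> h / 2 * (norm y)\<^sup>2"
    using assms mult_left_mono[of h "1/2" h] by (intro mult_right_mono) (simp_all add: power2_eq_square)
  finally show ?thesis
    using quadratic gap_error_transversal_le[OF assms, of y]
    unfolding gap_eq w_def[symmetric] by linarith
qed

(* Along v, J is the cost plus the larger of two branches a and b that agree at 0; a is
   midpoint convex while b - a grows linearly for negative arguments, so the maximum has a
   kink at 0. *)

lemma not_differentiable_at_tie: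
  assumes "x \<noteq> 0" and tie: "gap (rot \<alpha> *v x) = 0"
  shows "\<not> J differentiable (at x)"
proof -
  define y where "y = rot \<alpha> *v x"
  define w :: "real^2" where "w = vector [- (y$1), y$2]"
  define v where "v = rot (- \<alpha>) *v w"
  define a where "a s = J (y + s *\<^sub>R w)" for s
  define b where "b s = J (perp (y + s *\<^sub>R w))" for s
  have "rot \<alpha> *v (x + s *\<^sub>R v) = y + s *\<^sub>R w" for s
    by (simp add: y_def v_def rot_rot matrix_vector_right_distrib matrix_vector_mult_scaleR)
  then have along: "J (x + s *\<^sub>R v) = cost (x + s *\<^sub>R v) + max (a s) (b s) / 10000" for s
    using bellman[of "x + s *\<^sub>R v"] by (simp add: next_value_eq a_def b_def)
  have "a 0 = b 0"
    using tie by (simp add: a_def b_def gap_def y_def)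
  have "0 < (norm y)\<^sup>2"
    using \<open>x \<noteq> 0\<close> by (simp add: y_def)
  show ?thesis
  proof (rule not_differentiable_at_if_second_difference_ge)
    show "0 < (norm y)\<^sup>2 / 10000" "(0::real) < 1/2"
      using \<open>0 < (norm y)\<^sup>2\<close> by simp_all
    fix h :: real assume "0 < h" "h < 1/2"
    have "2 * cost x \<le> cost (x + h *\<^sub>R v) + cost (x - h *\<^sub>R v)"
      using cost_parallelogram[of x "h *\<^sub>R v"] cost_nonneg[of "h *\<^sub>R v"] by simp
    moreover have "2 * a 0 \<le> a h + a (- h)"
      using J_midpoint_convex[of y "h *\<^sub>R w"] by (simp add: a_def)
    moreover have "h * (norm y)\<^sup>2 \<le> b (- h) - a (- h)"
      using gap_decreases_transversally[of h y] tie \<open>0 < h\<close> \<open>h < 1/2\<close>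
      by (simp add: a_def b_def gap_def w_def y_def)
    moreover have "a h + b (- h) \<le> max (a h) (b h) + max (a (- h)) (b (- h))"
      by (intro add_mono) simp_all
    ultimately show "(norm y)\<^sup>2 / 10000 * h \<le> J (x + h *\<^sub>R v) + J (x - h *\<^sub>R v) - 2 * J x"
      using along[of h] along[of "- h"] along[of 0] \<open>a 0 = b 0\<close> by (simp add: mult.commute)
  qed
qed

lemma invertible_rotation_mats: "invertible (rotation_mats \<alpha> i)"
  by (simp add: invertible_det_nz rotation_mats_def det_scaleR_rot)

lemma rotation_mats_mult_dir:
  "rotation_mats \<alpha> 1 *v dir u = (1/100) *\<^sub>R dir (u + \<alpha>)"
  "rotation_mats \<alpha> 2 *v dir u = (1/100) *\<^sub>R dir (u + \<alpha> - pi / 2)"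
  unfolding rotation_mats_mult_vec by (simp_all add: rot_dir perp_dir)

lemma gap_dir: "gap (dir t) = J (dir t) - J (dir (t - pi / 2))"
  by (simp add: gap_def perp_dir)

lemma gap_dir_add_half_pi: "gap (dir (t + pi / 2)) = - gap (dir t)"
proof -
  have "t - pi / 2 + pi = t + pi / 2"
    by simp
  then have "dir (t + pi / 2) = - dir (t - pi / 2)"
    using dir_add_pi[of "t - pi / 2"] by (simp only:)
  then show ?thesis
    unfolding gap_dir by simp
qed

lemma gap_dir_eq: "gap (dir t) = gap_error (dir t) - cos (2 * t)"
  by (simp add: gap_eq dir_def cos_double)

lemma abs_gap_error_dir_le: "\<bar>gap_error (dir t)\<bar> \<le> 4/9999"
  using abs_gap_error_le[of "dir t"] by simp

lemma abs_gap_error_dir_diff_le: "\<bar>gap_error (dir a) - gap_error (dir b)\<bar> \<le> 8/9999 * \<bar>a - b\<bar>"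
proof -
  have "norm (dir a - dir b) * norm (dir a + dir b) \<le> \<bar>a - b\<bar> * 2"
    using norm_dir_diff_le[of a b] norm_triangle_ineq[of "dir a" "dir b"] by (intro mult_mono) simp_all
  then show ?thesis
    using abs_gap_error_diff_le[of "dir a" "dir b"] by simp
qed

lemma continuous_gap_dir: "continuous_on UNIV (\<lambda>t. gap (dir t))"
proof -
  have J: "continuous_on UNIV J"
    by (simp add: continuous_at_imp_continuous_on isCont_J)
  have "continuous_on UNIV (\<lambda>t::real. t - pi / 2)"
    by (intro continuous_intros)
  then have "continuous_on UNIV (\<lambda>t. dir (t - pi / 2))"
    by (rule continuous_on_compose2[OF continuous_dir _ subset_UNIV])
  then show ?thesis
    unfolding gap_dir
    using continuous_on_compose2[OF J _ subset_UNIV] continuous_dir by (intro continuous_on_diff) auto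
qed

lemma gap_dir_root_exists: "\<exists>\<gamma>. gap (dir \<gamma>) = 0"
proof -
  have "gap (dir 0) \<le> 0" "0 \<le> gap (dir (pi / 2))"
    using gap_dir_eq[of 0] gap_dir_eq[of "pi / 2"] abs_gap_error_dir_le[of 0]
      abs_gap_error_dir_le[of "pi / 2"]
    by (simp_all add: abs_le_iff)
  then show ?thesis
    using IVT'[of "\<lambda>t. gap (dir t)" 0 0 "pi / 2"] continuous_on_subset[OF continuous_gap_dir]
    by auto
qed

lemma gap_dir_zero_add_int:
  assumes "gap (dir t) = 0"
  shows "gap (dir (t + of_int m * (pi / 2))) = 0"
proof (induction m rule: int_induct[where k = 0])
  case (step1 i)
  have "t + of_int (i + 1) * (pi / 2) = (t + of_int i * (pi / 2)) + pi / 2"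
    by (simp add: algebra_simps)
  then show ?case
    using step1 by (simp only: gap_dir_add_half_pi)
next
  case (step2 i)
  have "t + of_int i * (pi / 2) = (t + of_int (i - 1) * (pi / 2)) + pi / 2"
    by (simp add: field_simps)
  then show ?case
    using step2 by (simp only: gap_dir_add_half_pi)
qed (simp add: assms)

lemma gap_dir_zeros_differ_by_half_pi_multiple:
  assumes "gap (dir a) = 0" "gap (dir b) = 0"
  shows "\<exists>m::int. b = a + of_int m * (pi / 2)"
proof -
  define m where "m = round ((b - a) / (pi / 2))"
  define a' where "a' = a + of_int m * (pi / 2)"
  have "b - a' = - ((of_int m - (b - a) / (pi / 2)) * (pi / 2))"
    by (simp add: a'_def field_simps)
  then have "\<bar>b - a'\<bar> = \<bar>of_int m - (b - a) / (pi / 2)\<bar> * (pi / 2)"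
    by (simp add: abs_mult)
  also have "\<dots> \<le> 1/2 * (pi / 2)"
    unfolding m_def by (intro mult_right_mono of_int_round_abs_le) simp
  finally have "\<bar>b - a'\<bar> \<le> pi / 4"
    by simp
  have "2 * b - 2 * a' = 2 * (b - a')"
    by simp
  then have double: "\<bar>2 * b - 2 * a'\<bar> = 2 * \<bar>b - a'\<bar>"
    by (simp only: abs_mult)
  then have close: "\<bar>2 * b - 2 * a'\<bar> \<le> pi / 2"
    using \<open>\<bar>b - a'\<bar> \<le> pi / 4\<close> by simp
  have "gap (dir a') = 0"
    unfolding a'_def by (rule gap_dir_zero_add_int[OF assms(1)])
  then have ca: "cos (2 * a') = gap_error (dir a')"
    by (simp add: gap_dir_eq)
  have cb: "cos (2 * b) = gap_error (dir b)"
    using assms(2) by (simp add: gap_dir_eq)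
  have "2 * b = 2 * a'"
  proof (rule eq_if_cos_small_and_slowly_varying)
    show "\<bar>cos (2 * a')\<bar> \<le> 1/100" "\<bar>cos (2 * b)\<bar> \<le> 1/100"
      using abs_gap_error_dir_le[of a'] abs_gap_error_dir_le[of b] unfolding ca cb by simp_all
    show "\<bar>cos (2 * b) - cos (2 * a')\<bar> \<le> \<bar>2 * b - 2 * a'\<bar> / 100"
      using abs_gap_error_dir_diff_le[of b a'] abs_ge_zero[of "b - a'"] unfolding ca cb double
      by linarith
  qed (rule close)
  then have "b = a + of_int m * (pi / 2)"
    by (simp add: a'_def)
  then show ?thesis ..
qed

lemma J_differentiable_dir_add_pi: "J differentiable (at (dir (u + pi))) \<longleftrightarrow> J differentiable (at (dir u))"
  using J_differentiable_scaleR_iff[of "- 1" "dir u"] by (simp add: dir_add_pi)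

lemma J_differentiable_dir_add_int_pi:
  "J differentiable (at (dir (u + of_int m * pi))) \<longleftrightarrow> J differentiable (at (dir u))"
proof (induction m rule: int_induct[where k = 0])
  case (step1 i)
  have "u + of_int (i + 1) * pi = (u + of_int i * pi) + pi"
    by (simp add: algebra_simps)
  then show ?case
    using step1 by (simp only: J_differentiable_dir_add_pi)
next
  case (step2 i)
  have "u + of_int i * pi = (u + of_int (i - 1) * pi) + pi"
    by (simp add: algebra_simps)
  then show ?case
    using step2 by (simp only: J_differentiable_dir_add_pi)
qed simp

lemma not_differentiable_dir_add_half_pi_multiples:
  assumes "\<not> J differentiable (at (dir u))" "\<not> J differentiable (at (dir (u + pi / 2)))"
  shows "\<not> J differentiable (at (dir (u + of_int j * (pi / 2))))"
proof (cases "even j")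
  case True
  then obtain m where "j = 2 * m" by blast
  then show ?thesis
    using assms(1) J_differentiable_dir_add_int_pi[of u m] by simp
next
  case False
  then obtain m where "j = 2 * m + 1" using oddE by blast
  then have "u + of_int j * (pi / 2) = (u + pi / 2) + of_int m * pi"
    by (simp add: field_simps)
  then show ?thesis
    using assms(2) J_differentiable_dir_add_int_pi[of "u + pi / 2" m] by (simp only: not_False_eq_True)
qed

lemma not_differentiable_at_dir_of_gap_zero:
  assumes "gap (dir t) = 0"
  shows "\<not> J differentiable (at (dir (t - \<alpha>)))"
proof (rule not_differentiable_at_tie)
  show "dir (t - \<alpha>) \<noteq> 0"
    by (metis norm_dir norm_zero zero_neq_one)
  show "gap (rot \<alpha> *v dir (t - \<alpha>)) = 0"
    using assms by (simp add: rot_dir)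
qed

lemma not_differentiable_at_dir_preimages:
  assumes "0 < gap (dir t)" and "\<not> J differentiable (at (dir t))"
  shows "\<not> J differentiable (at (dir (t - \<alpha> + of_int j * (pi / 2))))"
proof (rule not_differentiable_dir_add_half_pi_multiples)
  have smaller: "J (dir (t - pi / 2)) < J (dir t)"
    using assms(1) by (simp add: gap_dir)
  have "J (dir (t + pi / 2)) = J (dir (t - pi / 2))"
    using gap_dir_add_half_pi[of t] by (simp add: gap_dir)
  have not_at_scaled: "\<not> J differentiable (at ((1/100) *\<^sub>R dir t))"
    using assms(2) J_differentiable_scaleR_iff[of "1/100" "dir t"] by simp
  show "\<not> J differentiable (at (dir (t - \<alpha>)))"
  proof
    assume "J differentiable (at (dir (t - \<alpha>)))"
    moreover have "J (rotation_mats \<alpha> 2 *v dir (t - \<alpha>)) < J (rotation_mats \<alpha> 1 *v dir (t - \<alpha>))"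
      unfolding rotation_mats_mult_dir using smaller by (simp add: J_scaleR)
    ultimately have "J differentiable (at (rotation_mats \<alpha> 1 *v dir (t - \<alpha>)))"
      using differentiable_at_dominant_branch[OF _ invertible_rotation_mats] by blast
    then show False
      unfolding rotation_mats_mult_dir using not_at_scaled by simp
  qed
  show "\<not> J differentiable (at (dir (t - \<alpha> + pi / 2)))"
  proof
    assume "J differentiable (at (dir (t - \<alpha> + pi / 2)))"
    moreover have "J (rotation_mats \<alpha> 1 *v dir (t - \<alpha> + pi / 2)) < J (rotation_mats \<alpha> 2 *v dir (t - \<alpha> + pi / 2))"
      unfolding rotation_mats_mult_dir using smaller \<open>J (dir (t + pi / 2)) = J (dir (t - pi / 2))\<close>
      by (simp add: J_scaleR add.commute)
    ultimately have "J differentiable (at (rotation_mats \<alpha> 2 *v dir (t - \<alpha> + pi / 2)))"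
      using differentiable_at_dominant_branch[OF _ invertible_rotation_mats] by blast
    then show False
      unfolding rotation_mats_mult_dir using not_at_scaled by simp
  qed
qed

lemma gap_dir_orbit_ne_zero:
  assumes irrational: "\<alpha> / pi \<notin> \<rat>" and root: "gap (dir \<gamma>) = 0"
  shows "gap (dir (\<gamma> - real (Suc k) * \<alpha>)) \<noteq> 0"
proof
  assume "gap (dir (\<gamma> - real (Suc k) * \<alpha>)) = 0"
  then obtain m :: int where "\<gamma> - real (Suc k) * \<alpha> = \<gamma> + of_int m * (pi / 2)"
    using gap_dir_zeros_differ_by_half_pi_multiple[OF root] by blast
  then have "\<alpha> / pi = - of_int m / (2 * real (Suc k))"
    by (simp add: field_simps)
  then show False
    using irrational by simp
qed

lemma gap_dir_pos_after_quarter_turns: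
  assumes "gap (dir t) \<noteq> 0"
  obtains j0 :: int where "0 < gap (dir (t + of_int j0 * (pi / 2)))"
proof (cases "0 < gap (dir t)")
  case True
  then show ?thesis
    using that[of 0] by simp
next
  case False
  then have "0 < gap (dir (t + pi / 2))"
    using assms gap_dir_add_half_pi[of t] by simp
  then show ?thesis
    using that[of 1] by simp
qed

lemma not_differentiable_on_orbit:
  assumes irrational: "\<alpha> / pi \<notin> \<rat>" and root: "gap (dir \<gamma>) = 0"
  shows "\<not> J differentiable (at (dir (\<gamma> - real (Suc k) * \<alpha> + of_int j * (pi / 2))))"
proof (induction k arbitrary: j)
  case 0
  have "gap (dir (\<gamma> + of_int j * (pi / 2))) = 0"
    by (rule gap_dir_zero_add_int[OF root])
  from not_differentiable_at_dir_of_gap_zero[OF this]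
  show ?case
    by (simp add: algebra_simps)
next
  case (Suc k)
  define t where "t = \<gamma> - real (Suc k) * \<alpha>"
  obtain j0 :: int where positive: "0 < gap (dir (t + of_int j0 * (pi / 2)))"
    using gap_dir_pos_after_quarter_turns gap_dir_orbit_ne_zero[OF irrational root] unfolding t_def by blast
  have "\<not> J differentiable (at (dir (t + of_int j0 * (pi / 2))))"
    using Suc.IH[of j0] by (simp add: t_def)
  moreover have "t + of_int j0 * (pi / 2) - \<alpha> + of_int (j - j0) * (pi / 2)
      = \<gamma> - real (Suc (Suc k)) * \<alpha> + of_int j * (pi / 2)"
    by (simp add: t_def field_simps)
  ultimately show ?case
    using not_differentiable_at_dir_preimages[OF positive, of "j - j0"] by simp
qed

end

section \<open>Density and the main result\<close>

lemma dense_orbit: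
  assumes "\<alpha> / pi \<notin> \<rat>"
  shows "closure (range (\<lambda>(k, j). \<gamma> - real (Suc k) * \<alpha> + of_int j * (pi / 2))) = UNIV"
proof -
  have "\<exists>k j. \<bar>\<gamma> - real (Suc k) * \<alpha> + of_int j * (pi / 2) - \<theta>\<bar> < e" if "0 < e" for \<theta> e
  proof -
    have "- (2 * \<alpha> / pi) \<notin> \<rat>"
    proof
      assume "- (2 * \<alpha> / pi) \<in> \<rat>"
      then have "- (2 * \<alpha> / pi) * (- 1 / 2) \<in> \<rat>"
        by (rule Rats_mult) simp
      then show False
        using assms by simp
    qed
    moreover have "0 < e * (2 / pi)"
      using \<open>0 < e\<close> by simp
    ultimately obtain h k :: int where "k > 0"
      and approx: "\<bar>of_int k * (- (2 * \<alpha> / pi)) - of_int h - (\<theta> - \<gamma>) * (2 / pi)\<bar> < e * (2 / pi)"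
      by (rule sequence_of_fractional_parts_is_dense)
    define n where "n = nat k - 1"
    have "real (Suc n) = of_int k"
      using \<open>k > 0\<close> by (simp add: n_def)
    then have shift: "\<gamma> - real (Suc n) * \<alpha> + of_int (- h) * (pi / 2) - \<theta>
        = (pi / 2) * (of_int k * (- (2 * \<alpha> / pi)) - of_int h - (\<theta> - \<gamma>) * (2 / pi))"
      by (simp add: field_simps)
    have "\<bar>\<gamma> - real (Suc n) * \<alpha> + of_int (- h) * (pi / 2) - \<theta>\<bar>
        = (pi / 2) * \<bar>of_int k * (- (2 * \<alpha> / pi)) - of_int h - (\<theta> - \<gamma>) * (2 / pi)\<bar>"
      unfolding shift abs_mult by simp
    also have "\<dots> < (pi / 2) * (e * (2 / pi))"
      by (rule mult_strict_left_mono[OF approx]) simp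
    also have "\<dots> = e"
      by simp
    finally show ?thesis
      by blast
  qed
  then show ?thesis
    by (auto simp: closure_approachable dist_real_def)
qed

lemma closure_cone_over_dense_angles:
  assumes "closure T = UNIV"
  shows "closure ((\<lambda>p. fst p *\<^sub>R dir (snd p)) ` ({0<..} \<times> T)) = UNIV"
proof -
  let ?f = "\<lambda>p::real \<times> real. fst p *\<^sub>R dir (snd p)"
  have "continuous_on UNIV ?f"
    by (rule continuous_on_scaleR[OF continuous_on_fst[OF continuous_on_id]
          continuous_on_compose2[OF continuous_dir continuous_on_snd[OF continuous_on_id] subset_UNIV]])
  then have image_closure: "?f ` closure ({0<..} \<times> T) \<subseteq> closure (?f ` ({0<..} \<times> T))"
    by (intro image_closure_subset[OF continuous_on_subset[OF _ subset_UNIV] closed_closure closure_subset])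
  have "x \<in> ?f ` closure ({0<..} \<times> T)" for x
  proof -
    obtain \<theta> where polar: "x = norm x *\<^sub>R dir \<theta>"
      using polar_decomposition by blast
    have "(norm x, \<theta>) \<in> closure ({0<..} \<times> T)"
      using assms by (simp add: closure_Times)
    then show ?thesis
      by (rule rev_image_eqI) (simp only: fst_conv snd_conv polar[symmetric])
  qed
  then show ?thesis
    by (intro sym[OF UNIV_eq_I] subsetD[OF image_closure])
qed

theorem corollary4:
  fixes \<alpha> :: real
  assumes "pi / 8 < \<alpha>" and "\<alpha> < 3 * pi / 8"
    and "\<alpha> / pi \<notin> \<rat>"
  defines "A \<equiv> (\<lambda>i::nat. if i = 1 then (0.01::real) *\<^sub>R rot \<alpha> else (0.01::real) *\<^sub>R rot (\<alpha> - pi / 2))"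
    and "c \<equiv> (\<lambda>x::real^2. (x $ 1)^2 + 2 * (x $ 2)^2)"
  shows "\<exists>S. closure S = (UNIV :: (real^2) set) \<and>
             (\<forall>x\<in>S. \<not> (worst_value A c) differentiable (at x))"
proof -
  interpret rotation_pair \<alpha> .
  have "worst_value A c = J"
    by (simp add: A_def rotation_mats_def c_def cost_def[abs_def])
  obtain \<gamma> where root: "gap (dir \<gamma>) = 0"
    using gap_dir_root_exists by blast
  let ?T = "range (\<lambda>(k, j). \<gamma> - real (Suc k) * \<alpha> + of_int j * (pi / 2))"
  let ?S = "(\<lambda>p. fst p *\<^sub>R dir (snd p)) ` ({0<..} \<times> ?T)"
  have "closure ?S = UNIV"
    by (rule closure_cone_over_dense_angles[OF dense_orbit[OF assms(3)]])
  moreover have "\<not> J differentiable (at x)" if "x \<in> ?S" for x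
  proof -
    obtain r k j where "0 < r" and "x = r *\<^sub>R dir (\<gamma> - real (Suc k) * \<alpha> + of_int j * (pi / 2))"
      using \<open>x \<in> ?S\<close> by auto
    then show ?thesis
      using not_differentiable_on_orbit[OF assms(3) root] J_differentiable_scaleR_iff by simp
  qed
  ultimately show ?thesis
    unfolding \<open>worst_value A c = J\<close> by blast
qed

end
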